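(* Let $\mathcal{C}$ be a cograph on a point set $\mathcal{P}$ whose edge values $\mathcal{C}(P,Q)$ are sets, such that (i) for all distinct points $P,Q,R$, with $a=\mathcal{C}(P,Q)$, $b=\mathcal{C}(Q,R)$, $c=\mathcal{C}(R,P)$, one has $a\cap b=b\cap c=a\cap c$; and (ii) for all distinct points $P,Q,R,S$, $\mathcal{C}(P,Q)\cap\mathcal{C}(R,S)=\mathcal{C}(Q,R)\cap\mathcal{C}(S,P)$. For each $P\in\mathcal{P}$ choose a new element $P_o$, the $P_o$ being pairwise distinct and not belonging to any edge set, and define $P'=\{P_o\}\cup\bigcup_{Q\in\mathcal{P},\,Q\neq P}\mathcal{C}(P,Q)$. Then the sets $P'$ ($P\in\mathcal{P}$) are pairwise distinct and $P'\cap S'=\mathcal{C}(P,S)$ for all distinct $P,S\in\mathcal{P}$; that is, $\{P':P\in\mathcal{P}\}$ is an intersection cograph having the edges of $\mathcal{C}$.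
   Context: A cograph is a function $\mathcal{C}$ assigning to each unordered pair $\{P,Q\}$ of distinct elements of a point set $\mathcal{P}$ a value $\mathcal{C}(P,Q)$. An intersection cograph has as points distinct sets, with the edge between $P$ and $Q$ equal to $P\cap Q$. *)

theory Defs
  imports Main
begin

text \<open>A cograph on a point set Ps with set-valued edges is modelled as a function
  C on unordered pairs, i.e. C {P,Q} is the edge value of the pair {P,Q}.\<close>

definition extended_point :: "'p set \<Rightarrow> ('p set \<Rightarrow> 'a set) \<Rightarrow> ('p \<Rightarrow> 'a) \<Rightarrow> 'p \<Rightarrow> 'a set" where
  "extended_point Ps C po P = insert (po P) (\<Union>Q\<in>Ps - {P}. C {P, Q})"

end

theory Submission
  imports Defs
begin

text \<open>An element shared by an edge at P and an edge at S already lies on the edge {P,S}: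
  if the two edges meet in a common point this is condition (i), otherwise condition (ii).
  Hence the union of the edges at P meets the union of the edges at S exactly in C {P,S},
  and the fresh markers make the extended points distinct without creating new intersections.\<close>

locale set_cograph =
  fixes Ps :: "'p set" and C :: "'p set \<Rightarrow> 'a set"
  assumes tri: "\<And>P Q R. \<lbrakk>P \<in> Ps; Q \<in> Ps; R \<in> Ps; P \<noteq> Q; Q \<noteq> R; P \<noteq> R\<rbrakk> \<Longrightarrow>
      C {P, Q} \<inter> C {Q, R} = C {Q, R} \<inter> C {R, P} \<and> C {Q, R} \<inter> C {R, P} = C {P, Q} \<inter> C {R, P}"
    and quad: "\<And>P Q R S. \<lbrakk>P \<in> Ps; Q \<in> Ps; R \<in> Ps; S \<in> Ps;
      P \<noteq> Q; P \<noteq> R; P \<noteq> S; Q \<noteq> R; Q \<noteq> S; R \<noteq> S\<rbrakk> \<Longrightarrow>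
      C {P, Q} \<inter> C {R, S} = C {Q, R} \<inter> C {S, P}"
begin

lemma edges_Int_subset_edge:
  assumes "P \<in> Ps" "Q \<in> Ps" "R \<in> Ps" "S \<in> Ps" "P \<noteq> Q" "S \<noteq> R" "P \<noteq> S"
  shows "C {P, Q} \<inter> C {S, R} \<subseteq> C {P, S}"
proof (cases "Q = S \<or> R = P")
  case True
  then show ?thesis by (auto simp: insert_commute)
next
  case False
  then have "Q \<noteq> S" "R \<noteq> P" by auto
  show ?thesis
  proof (cases "Q = R")
    case True
    then have "C {P, Q} \<inter> C {S, R} = C {P, Q} \<inter> C {Q, S}"
      by (simp add: insert_commute)
    also have "\<dots> = C {P, Q} \<inter> C {S, P}"
      using tri[of P Q S] assms \<open>Q \<noteq> S\<close> by simp
    finally show ?thesis by (auto simp: insert_commute)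
  next
    case False
    have "C {P, Q} \<inter> C {S, R} = C {P, Q} \<inter> C {R, S}"
      by (simp add: insert_commute)
    also have "\<dots> = C {Q, R} \<inter> C {S, P}"
      using quad[of P Q R S] assms \<open>Q \<noteq> S\<close> \<open>R \<noteq> P\<close> False by simp
    finally show ?thesis by (auto simp: insert_commute)
  qed
qed

end

locale marked_set_cograph = set_cograph +
  fixes po :: "'p \<Rightarrow> 'a"
  assumes po_inj: "inj_on po Ps"
    and po_fresh: "\<And>P Q R. \<lbrakk>P \<in> Ps; Q \<in> Ps; R \<in> Ps; Q \<noteq> R\<rbrakk> \<Longrightarrow> po P \<notin> C {Q, R}"
begin

abbreviation ext_pt :: "'p \<Rightarrow> 'a set" where
  "ext_pt \<equiv> extended_point Ps C po"

lemma marker_notin_extended_point: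
  assumes "P \<in> Ps" "S \<in> Ps" "P \<noteq> S"
  shows "po P \<notin> ext_pt S"
proof -
  have "po P \<noteq> po S"
    using po_inj assms by (auto dest: inj_onD)
  then show ?thesis
    using po_fresh assms by (auto simp: extended_point_def)
qed

lemma extended_point_Int:
  assumes P: "P \<in> Ps" and S: "S \<in> Ps" and "P \<noteq> S"
  shows "ext_pt P \<inter> ext_pt S = C {P, S}"
proof
  show "C {P, S} \<subseteq> ext_pt P \<inter> ext_pt S"
    using assms by (auto simp: extended_point_def insert_commute)
next
  show "ext_pt P \<inter> ext_pt S \<subseteq> C {P, S}"
  proof
    fix x assume x: "x \<in> ext_pt P \<inter> ext_pt S"
    then have "x \<noteq> po P" "x \<noteq> po S"
      using marker_notin_extended_point assms by auto
    with x obtain Q R where "Q \<in> Ps" "Q \<noteq> P" "x \<in> C {P, Q}" "R \<in> Ps" "R \<noteq> S" "x \<in> C {S, R}"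
      by (auto simp: extended_point_def)
    then show "x \<in> C {P, S}"
      using edges_Int_subset_edge[of P Q R S] assms by blast
  qed
qed

lemma inj_on_extended_point: "inj_on ext_pt Ps"
proof (rule inj_onI, rule ccontr)
  fix P S assume "P \<in> Ps" "S \<in> Ps" "ext_pt P = ext_pt S" "P \<noteq> S"
  moreover have "po P \<in> ext_pt P"
    by (simp add: extended_point_def)
  ultimately show False
    using marker_notin_extended_point by metis
qed

end

theorem proposition4p1p3:
  fixes Ps :: "'p set" and C :: "'p set \<Rightarrow> 'a set" and po :: "'p \<Rightarrow> 'a"
  assumes tri: "\<And>P Q R. \<lbrakk>P \<in> Ps; Q \<in> Ps; R \<in> Ps; P \<noteq> Q; Q \<noteq> R; P \<noteq> R\<rbrakk> \<Longrightarrow>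
      C {P, Q} \<inter> C {Q, R} = C {Q, R} \<inter> C {R, P} \<and> C {Q, R} \<inter> C {R, P} = C {P, Q} \<inter> C {R, P}"
    and quad: "\<And>P Q R S. \<lbrakk>P \<in> Ps; Q \<in> Ps; R \<in> Ps; S \<in> Ps;
      P \<noteq> Q; P \<noteq> R; P \<noteq> S; Q \<noteq> R; Q \<noteq> S; R \<noteq> S\<rbrakk> \<Longrightarrow>
      C {P, Q} \<inter> C {R, S} = C {Q, R} \<inter> C {S, P}"
    and o_inj: "inj_on po Ps"
    and o_new: "\<And>P Q R. \<lbrakk>P \<in> Ps; Q \<in> Ps; R \<in> Ps; Q \<noteq> R\<rbrakk> \<Longrightarrow> po P \<notin> C {Q, R}"
  shows "inj_on (extended_point Ps C po) Ps \<and>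
    (\<forall>P\<in>Ps. \<forall>S\<in>Ps. P \<noteq> S \<longrightarrow>
       extended_point Ps C po P \<inter> extended_point Ps C po S = C {P, S})"
proof -
  interpret marked_set_cograph Ps C po
    using tri quad o_inj o_new by unfold_locales
  show ?thesis
    using inj_on_extended_point extended_point_Int by blast
qed

end
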